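(* Let $\mathcal{H}=\mathbb{C}^2$ and let $\mathcal{L}=(\tilde H,\Gamma)$ be a minimally degenerate dephasing Lindbladian on $\mathcal{B}(\mathcal{H})$. Then there exist a non-degenerate, traceless self-adjoint operator $H$ on $\mathbb{C}^2$ and a real number $\gamma\geq 0$ such that $$\mathcal{L}=\mathcal{L}_0+\frac{\gamma}{2}\mathcal{D},\qquad \mathcal{L}_0\rho=-i[H,\rho],\qquad \mathcal{D}\rho=-[\sqrt{H},[\sqrt{H},\rho]],$$ where $\sqrt{H}:=\operatorname{sgn}(H)\sqrt{|H|}$ (functional calculus). Moreover, if $\mathcal{L}=\mathcal{L}_s$ depends smoothly on a real parameter $s$ (i.e. $\tilde H_s$ and the $\Gamma_{\alpha,s}$ are smooth in $s$), then $H_s$ and $\gamma_s$ in this representation depend smoothly on $s$ as well.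
   Context: For a finite-dimensional Hilbert space $\mathcal{H}$, a Lindbladian $\mathcal{L}=(\tilde H,\Gamma)$ is the super-operator on $\mathcal{B}(\mathcal{H})$ given by $\mathcal{L}\rho=-i[\tilde H,\rho]+\sum_{\alpha\in I}\big(\Gamma_\alpha\rho\Gamma_\alpha^*-\tfrac12(\Gamma_\alpha^*\Gamma_\alpha\rho+\rho\Gamma_\alpha^*\Gamma_\alpha)\big)$, where $\tilde H=\tilde H^*$, $I$ is a finite index set and $\Gamma_\alpha$ are operators on $\mathcal{H}$. It is called dephasing if $\Gamma_\alpha=f_\alpha(\tilde H)$ for bounded Borel functions $f_\alpha$. A dephasing Lindbladian on an $n$-dimensional space has a kernel of dimension at least $n$; it is called minimally degenerate if each of its eigenvalues is minimally degenerate, i.e. the kernel has dimension exactly $n$ and every nonzero eigenvalue of $\mathcal{L}$ is simple. *)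

theory Defs
  imports Jordan_Normal_Form.Jordan_Normal_Form Jordan_Normal_Form.Schur_Decomposition Jordan_Normal_Form.Matrix_Kernel
begin

definition hermitian_op :: "nat \<Rightarrow> complex mat \<Rightarrow> bool" where
  "hermitian_op n A \<longleftrightarrow> A \<in> carrier_mat n n \<and> mat_adjoint A = A"

definition unitary_op :: "nat \<Rightarrow> complex mat \<Rightarrow> bool" where
  "unitary_op n U \<longleftrightarrow> U \<in> carrier_mat n n \<and> mat_adjoint U * U = 1\<^sub>m n \<and> U * mat_adjoint U = 1\<^sub>m n"

definition diag_op :: "nat \<Rightarrow> (nat \<Rightarrow> complex) \<Rightarrow> complex mat" where
  "diag_op n d = mat n n (\<lambda>(i,j). if i = j then d i else 0)"

definition op_trace :: "nat \<Rightarrow> complex mat \<Rightarrow> complex" where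
  "op_trace n A = (\<Sum>i<n. A $$ (i,i))"

text \<open>Functional calculus f(A) of a self-adjoint operator A for f : R -> C:
  diagonalise A = U diag(d) U^* with U unitary and d real; then f(A) = U diag(f o d) U^*.
  (This is independent of the chosen diagonalisation.)\<close>

definition matfun :: "nat \<Rightarrow> (real \<Rightarrow> complex) \<Rightarrow> complex mat \<Rightarrow> complex mat" where
  "matfun n f A = (THE B. \<exists>U d. unitary_op n U \<and>
      A = U * diag_op n (\<lambda>i. complex_of_real (d i)) * mat_adjoint U \<and>
      B = U * diag_op n (\<lambda>i. f (d i)) * mat_adjoint U)"

definition signed_sqrt_op :: "nat \<Rightarrow> complex mat \<Rightarrow> complex mat" where
  "signed_sqrt_op n H = matfun n (\<lambda>x. complex_of_real (sgn x * sqrt \<bar>x\<bar>)) H"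

definition nondegenerate_op :: "nat \<Rightarrow> complex mat \<Rightarrow> bool" where
  "nondegenerate_op n A \<longleftrightarrow> A \<in> carrier_mat n n \<and>
     (\<forall>\<mu>. eigenvalue A \<mu> \<longrightarrow> Polynomial.order \<mu> (char_poly A) = 1)"

definition commutator :: "complex mat \<Rightarrow> complex mat \<Rightarrow> complex mat" where
  "commutator A B = A * B - B * A"

definition mat_sum :: "nat \<Rightarrow> ('i \<Rightarrow> complex mat) \<Rightarrow> 'i set \<Rightarrow> complex mat" where
  "mat_sum n F I = mat n n (\<lambda>ij. \<Sum>\<alpha>\<in>I. F \<alpha> $$ ij)"

definition lindbladian :: "nat \<Rightarrow> complex mat \<Rightarrow> 'i set \<Rightarrow> ('i \<Rightarrow> complex mat) \<Rightarrow> complex mat \<Rightarrow> complex mat" where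
  "lindbladian n Ht I \<Gamma> \<rho> =
     (- \<i>) \<cdot>\<^sub>m commutator Ht \<rho> +
     mat_sum n (\<lambda>\<alpha>. \<Gamma> \<alpha> * \<rho> * mat_adjoint (\<Gamma> \<alpha>)
        - (1/2) \<cdot>\<^sub>m (mat_adjoint (\<Gamma> \<alpha>) * \<Gamma> \<alpha> * \<rho> + \<rho> * mat_adjoint (\<Gamma> \<alpha>) * \<Gamma> \<alpha>)) I"

definition dephasing :: "nat \<Rightarrow> complex mat \<Rightarrow> 'i set \<Rightarrow> ('i \<Rightarrow> complex mat) \<Rightarrow> bool" where
  "dephasing n Ht I \<Gamma> \<longleftrightarrow> hermitian_op n Ht \<and> finite I \<and>
     (\<forall>\<alpha>\<in>I. \<exists>f. \<Gamma> \<alpha> = matfun n f Ht)"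

text \<open>Matrix of a super-operator on B(C^n) w.r.t. the matrix-unit basis E_(i,j),
  vectorised index k = n*i + j.\<close>

definition mat_unit :: "nat \<Rightarrow> nat \<Rightarrow> nat \<Rightarrow> complex mat" where
  "mat_unit n a b = mat n n (\<lambda>(i,j). if i = a \<and> j = b then 1 else 0)"

definition superop_mat :: "nat \<Rightarrow> (complex mat \<Rightarrow> complex mat) \<Rightarrow> complex mat" where
  "superop_mat n L = mat (n*n) (n*n)
     (\<lambda>(k,l). L (mat_unit n (l div n) (l mod n)) $$ (k div n, k mod n))"

definition minimally_degenerate :: "nat \<Rightarrow> (complex mat \<Rightarrow> complex mat) \<Rightarrow> bool" where
  "minimally_degenerate n L \<longleftrightarrow>
     kernel_dim (superop_mat n L) = n \<and>
     (\<forall>\<mu>. eigenvalue (superop_mat n L) \<mu> \<and> \<mu> \<noteq> 0 \<longrightarrow> Polynomial.order \<mu> (char_poly (superop_mat n L)) = 1)"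

definition smooth_fun :: "(real \<Rightarrow> 'a::real_normed_vector) \<Rightarrow> bool" where
  "smooth_fun f \<longleftrightarrow> (\<exists>D :: nat \<Rightarrow> real \<Rightarrow> 'a. D 0 = f \<and>
      (\<forall>k t. (D k has_vector_derivative D (Suc k) t) (at t)))"

definition smooth_op_family :: "nat \<Rightarrow> (real \<Rightarrow> complex mat) \<Rightarrow> bool" where
  "smooth_op_family n A \<longleftrightarrow> (\<forall>s. A s \<in> carrier_mat n n) \<and>
     (\<forall>i<n. \<forall>j<n. smooth_fun (\<lambda>s. A s $$ (i,j)))"

end

theory Submission
  imports Defs
begin

text \<open>Since every jump operator is a function of the Hamiltonian, everything happens in the
  commutative algebra spanned by 1 and K, where the Hamiltonian is m + r K with K a traceless
  Hermitian involution. Writing each jump operator as u + v K, the Lindbladian becomes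
  \<rho> \<mapsto> -i w [K, \<rho>] - (\<sigma>/2) [K, [K, \<rho>]] with w = r - \<Sigma> Im (v conj u) and \<sigma> = \<Sigma> |v|^2.
  If w = 0 the Lindbladian is a multiple of the double commutator, whose superoperator matrix is
  similar to diag(0, -4c, -4c, 0): it has either a kernel of dimension 4 or a double nonzero
  eigenvalue, so it is not minimally degenerate. Hence w \<noteq> 0, and H = w K with \<gamma> = \<sigma> / |w|
  works, because sqrt(H) = sgn(w) sqrt(|w|) K. Minimal degeneracy also forces r > 0, and then
  w, \<sigma> and K are smooth expressions in the matrix entries.\<close>

section \<open>Smooth functions of a real parameter\<close>

lemma smooth_fun_coinduct:
  assumes "f \<in> C" and step: "\<And>g. g \<in> C \<Longrightarrow> \<exists>g'\<in>C. \<forall>t. (g has_vector_derivative g' t) (at t)"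
  shows "smooth_fun f"
proof -
  obtain der where der: "\<And>g. g \<in> C \<Longrightarrow> der g \<in> C \<and> (\<forall>t. (g has_vector_derivative der g t) (at t))"
    using step by metis
  have "(der ^^ k) f \<in> C" for k by (induction k) (auto simp: assms(1) der)
  then show ?thesis unfolding smooth_fun_def by (intro exI[of _ "\<lambda>k. (der ^^ k) f"]) (simp add: der)
qed

lemma smooth_fun_derivative:
  assumes "smooth_fun f"
  obtains f' where "\<And>t. (f has_vector_derivative f' t) (at t)" and "smooth_fun f'"
proof -
  from assms obtain D where "D 0 = f" and "\<And>k t. (D k has_vector_derivative D (Suc k) t) (at t)"
    unfolding smooth_fun_def by blast
  then show ?thesis by (intro that[of "D 1"]) (auto simp: smooth_fun_def intro!: exI[of _ "\<lambda>k. D (Suc k)"])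
qed

text \<open>The coinduction runs over finite sums because the derivative of a product (or of a power)
  is a sum of two such terms.\<close>

lemma smooth_fun_sum_list_coinduct:
  fixes T :: "'b \<Rightarrow> real \<Rightarrow> 'a::real_normed_vector"
  assumes step: "\<And>x. P x \<Longrightarrow> \<exists>ys. list_all P ys \<and> (\<forall>t. (T x has_vector_derivative (\<Sum>y\<leftarrow>ys. T y t)) (at t))"
    and xs: "list_all P xs"
  shows "smooth_fun (\<lambda>t. \<Sum>x\<leftarrow>xs. T x t)"
proof (rule smooth_fun_coinduct[where C = "{\<lambda>t. \<Sum>x\<leftarrow>xs. T x t | xs. list_all P xs}"])
  obtain ds where ds: "\<And>x. P x \<Longrightarrow> list_all P (ds x) \<and> (\<forall>t. (T x has_vector_derivative (\<Sum>y\<leftarrow>ds x. T y t)) (at t))"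
    using step by metis
  fix g assume "g \<in> {\<lambda>t. \<Sum>x\<leftarrow>xs. T x t | xs. list_all P xs}"
  then obtain xs where xs: "list_all P xs" and g: "g = (\<lambda>t. \<Sum>x\<leftarrow>xs. T x t)" by blast
  have "((\<lambda>t. \<Sum>x\<leftarrow>xs. T x t) has_vector_derivative (\<Sum>y\<leftarrow>concat (map ds xs). T y t)) (at t)" for t
    using xs by (induction xs) (auto intro!: has_vector_derivative_add simp: ds)
  moreover have "list_all P (concat (map ds xs))" using xs ds by (induction xs) auto
  ultimately show "\<exists>g'\<in>{\<lambda>t. \<Sum>x\<leftarrow>xs. T x t | xs. list_all P xs}. \<forall>t. (g has_vector_derivative g' t) (at t)"
    unfolding g by (intro bexI[of _ "\<lambda>t. \<Sum>y\<leftarrow>concat (map ds xs). T y t"]) auto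
qed (use xs in blast)

lemma smooth_fun_const: "smooth_fun (\<lambda>t. c)"
  unfolding smooth_fun_def by (intro exI[of _ "\<lambda>k t. if k = 0 then c else 0"]) auto

lemma smooth_fun_add:
  assumes "smooth_fun f" "smooth_fun g"
  shows "smooth_fun (\<lambda>t. f t + g t)"
proof -
  have "smooth_fun (\<lambda>t. \<Sum>h\<leftarrow>[f, g]. h t)"
  proof (rule smooth_fun_sum_list_coinduct[where P = smooth_fun])
    fix h :: "real \<Rightarrow> 'a" assume "smooth_fun h"
    then obtain h' where "\<And>t. (h has_vector_derivative h' t) (at t)" "smooth_fun h'"
      using smooth_fun_derivative by blast
    then show "\<exists>ys. list_all smooth_fun ys \<and> (\<forall>t. (h has_vector_derivative (\<Sum>k\<leftarrow>ys. k t)) (at t))"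
      by (intro exI[of _ "[h']"]) simp
  qed (use assms in simp)
  then show ?thesis by simp
qed

lemma smooth_fun_sum:
  "finite I \<Longrightarrow> (\<And>i. i \<in> I \<Longrightarrow> smooth_fun (F i)) \<Longrightarrow> smooth_fun (\<lambda>t. \<Sum>i\<in>I. F i t)"
  by (induction I rule: finite_induct) (auto intro!: smooth_fun_const smooth_fun_add)

lemma smooth_fun_bounded_linear:
  assumes "bounded_linear L" and "smooth_fun f"
  shows "smooth_fun (\<lambda>t. L (f t))"
proof -
  have "smooth_fun (\<lambda>t. \<Sum>g\<leftarrow>[f]. L (g t))"
  proof (rule smooth_fun_sum_list_coinduct[where P = smooth_fun])
    fix g :: "real \<Rightarrow> 'a" assume "smooth_fun g"
    then obtain g' where "\<And>t. (g has_vector_derivative g' t) (at t)" "smooth_fun g'"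
      using smooth_fun_derivative by blast
    then show "\<exists>ys. list_all smooth_fun ys \<and> (\<forall>t. ((\<lambda>t. L (g t)) has_vector_derivative (\<Sum>h\<leftarrow>ys. L (h t))) (at t))"
      by (intro exI[of _ "[g']"]) (simp add: bounded_linear.has_vector_derivative[OF assms(1)])
  qed (use assms in simp)
  then show ?thesis by simp
qed

lemma smooth_fun_mult:
  fixes f g :: "real \<Rightarrow> 'a::real_normed_algebra"
  assumes "smooth_fun f" "smooth_fun g"
  shows "smooth_fun (\<lambda>t. f t * g t)"
proof -
  have "smooth_fun (\<lambda>t. \<Sum>x\<leftarrow>[(f, g)]. fst x t * snd x t)"
  proof (rule smooth_fun_sum_list_coinduct[where P = "\<lambda>x. smooth_fun (fst x) \<and> smooth_fun (snd x)"])
    fix x :: "(real \<Rightarrow> 'a) \<times> (real \<Rightarrow> 'a)"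
    assume "smooth_fun (fst x) \<and> smooth_fun (snd x)"
    then obtain a b where x: "x = (a, b)" and a: "smooth_fun a" and b: "smooth_fun b"
      by (cases x) auto
    obtain a' where "\<And>t. (a has_vector_derivative a' t) (at t)" "smooth_fun a'"
      using smooth_fun_derivative[OF a] by blast
    moreover obtain b' where "\<And>t. (b has_vector_derivative b' t) (at t)" "smooth_fun b'"
      using smooth_fun_derivative[OF b] by blast
    ultimately show "\<exists>ys. list_all (\<lambda>x. smooth_fun (fst x) \<and> smooth_fun (snd x)) ys \<and>
        (\<forall>t. ((\<lambda>t. fst x t * snd x t) has_vector_derivative (\<Sum>y\<leftarrow>ys. fst y t * snd y t)) (at t))"
      using a b unfolding x
      by (intro exI[of _ "[(a, b'), (a', b)]"]) (auto intro!: has_vector_derivative_mult)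
  qed (use assms in simp)
  then show ?thesis by simp
qed

lemma smooth_fun_powr:
  fixes g :: "real \<Rightarrow> real"
  assumes g: "smooth_fun g" and pos: "\<And>t. g t > 0"
  shows "smooth_fun (\<lambda>t. g t powr b)"
proof -
  obtain g' where g': "\<And>t. (g has_vector_derivative g' t) (at t)" "smooth_fun g'"
    using smooth_fun_derivative[OF g] by blast
  have "smooth_fun (\<lambda>t. \<Sum>x\<leftarrow>[(\<lambda>t. 1, b)]. fst x t * g t powr snd x)"
  proof (rule smooth_fun_sum_list_coinduct[where P = "\<lambda>x. smooth_fun (fst x)"])
    fix x :: "(real \<Rightarrow> real) \<times> real"
    assume "smooth_fun (fst x)"
    then obtain a e where x: "x = (a, e)" and a: "smooth_fun a" by (cases x) auto
    obtain a' where a': "\<And>t. (a has_vector_derivative a' t) (at t)" "smooth_fun a'"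
      using smooth_fun_derivative[OF a] by blast
    have "((\<lambda>t. g t powr e) has_vector_derivative e * g t powr (e - 1) * g' t) (at t)" for t
      using DERIV_fun_powr[of g "g' t" t e] g'(1) pos
      by (simp add: has_real_derivative_iff_has_vector_derivative)
    then have "((\<lambda>t. a t * g t powr e) has_vector_derivative
        a' t * g t powr e + ((e * a t * g' t) * g t powr (e - 1) + 0)) (at t)" for t
      by (rule has_vector_derivative_eq_rhs[OF has_vector_derivative_mult[OF a'(1)]])
        (simp add: algebra_simps)
    moreover have "smooth_fun (\<lambda>t. e * a t * g' t)"
      using a g'(2) by (intro smooth_fun_mult smooth_fun_const)
    ultimately show "\<exists>ys. list_all (\<lambda>x. smooth_fun (fst x)) ys \<and>
        (\<forall>t. ((\<lambda>t. fst x t * g t powr snd x) has_vector_derivative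
          (\<Sum>y\<leftarrow>ys. fst y t * g t powr snd y)) (at t))"
      using a'(2) unfolding x by (intro exI[of _ "[(a', e), (\<lambda>t. e * a t * g' t, e - 1)]"]) simp
  qed (simp add: smooth_fun_const)
  then show ?thesis by simp
qed

lemma smooth_fun_uminus:
  fixes f :: "real \<Rightarrow> 'a::real_normed_vector"
  shows "smooth_fun f \<Longrightarrow> smooth_fun (\<lambda>t. - f t)"
  by (rule smooth_fun_bounded_linear[OF bounded_linear_minus[OF bounded_linear_ident]])

lemma smooth_fun_diff:
  fixes f g :: "real \<Rightarrow> 'a::real_normed_vector"
  shows "smooth_fun f \<Longrightarrow> smooth_fun g \<Longrightarrow> smooth_fun (\<lambda>t. f t - g t)"
  using smooth_fun_add[OF _ smooth_fun_uminus, of f g] by simp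

lemma smooth_fun_Re: "smooth_fun f \<Longrightarrow> smooth_fun (\<lambda>t. Re (f t))"
  and smooth_fun_Im: "smooth_fun f \<Longrightarrow> smooth_fun (\<lambda>t. Im (f t))"
  and smooth_fun_cnj: "smooth_fun f \<Longrightarrow> smooth_fun (\<lambda>t. cnj (f t))"
  and smooth_fun_of_real: "smooth_fun g \<Longrightarrow> smooth_fun (\<lambda>t. complex_of_real (g t))"
  by (rule smooth_fun_bounded_linear; simp add: bounded_linear_Re bounded_linear_Im bounded_linear_cnj
      bounded_linear_of_real)+

lemma smooth_fun_divide_const: "smooth_fun (f :: real \<Rightarrow> 'a::real_normed_field) \<Longrightarrow> smooth_fun (\<lambda>t. f t / c)"
  by (rule smooth_fun_bounded_linear[OF bounded_linear_divide])

lemma smooth_fun_power2: "smooth_fun (f :: real \<Rightarrow> 'a::real_normed_algebra_1) \<Longrightarrow> smooth_fun (\<lambda>t. (f t)\<^sup>2)"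
  unfolding power2_eq_square by (rule smooth_fun_mult)

lemma smooth_fun_sqrt:
  fixes g :: "real \<Rightarrow> real"
  assumes "smooth_fun g" and "\<And>t. g t > 0"
  shows "smooth_fun (\<lambda>t. sqrt (g t))"
proof -
  have "smooth_fun (\<lambda>t. g t powr (1/2))" using assms by (rule smooth_fun_powr)
  then show ?thesis using assms(2) by (simp add: powr_half_sqrt less_imp_le)
qed

lemma smooth_fun_inverse:
  fixes g :: "real \<Rightarrow> real"
  assumes "smooth_fun g" and "\<And>t. g t > 0"
  shows "smooth_fun (\<lambda>t. 1 / g t)"
proof -
  have "smooth_fun (\<lambda>t. g t powr (-1))" using assms by (rule smooth_fun_powr)
  moreover have "g t powr (-1) = 1 / g t" for t
    using assms(2)[of t] by (simp add: powr_minus_divide)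
  ultimately show ?thesis by simp
qed

lemma smooth_op_familyD:
  assumes "smooth_op_family n A" and "i < n" "j < n"
  shows "smooth_fun (\<lambda>s. A s $$ (i, j))"
  using assms unfolding smooth_op_family_def by blast

section \<open>Unitary conjugation\<close>

lemma mat_adjoint_carrier: "A \<in> carrier_mat n m \<Longrightarrow> mat_adjoint A \<in> carrier_mat m n"
  unfolding mat_adjoint_def carrier_mat_def by simp

lemma unitary_opD:
  assumes "unitary_op n U"
  shows "U \<in> carrier_mat n n" "mat_adjoint U \<in> carrier_mat n n"
    "mat_adjoint U * U = 1\<^sub>m n" "U * mat_adjoint U = 1\<^sub>m n"
  using assms mat_adjoint_carrier unfolding unitary_op_def by auto

lemma unitary_adjoint_mult_cancel:
  assumes U: "unitary_op n U" and Z: "dim_row Z = n"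
  shows "mat_adjoint U * (U * Z) = Z"
proof -
  have Zc: "Z \<in> carrier_mat n (dim_col Z)" using Z by auto
  note UU = unitary_opD[OF U]
  show ?thesis
    using UU Zc by (simp only: assoc_mult_mat[OF UU(2) UU(1) Zc, symmetric] UU(3) left_mult_one_mat)
qed

lemma similarity_affine:
  fixes P Q D :: "'a :: comm_ring_1 mat"
  assumes P: "P \<in> carrier_mat n n" and Q: "Q \<in> carrier_mat n n" and PQ: "P * Q = 1\<^sub>m n"
    and D: "D \<in> carrier_mat n n"
  shows "P * (a \<cdot>\<^sub>m 1\<^sub>m n + b \<cdot>\<^sub>m D) * Q = a \<cdot>\<^sub>m 1\<^sub>m n + b \<cdot>\<^sub>m (P * D * Q)"
proof -
  have "P * (a \<cdot>\<^sub>m 1\<^sub>m n + b \<cdot>\<^sub>m D) = P * (a \<cdot>\<^sub>m 1\<^sub>m n) + P * (b \<cdot>\<^sub>m D)"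
    using P D by (intro mult_add_distrib_mat) auto
  also have "\<dots> = a \<cdot>\<^sub>m P + b \<cdot>\<^sub>m (P * D)"
    using P by (simp add: mult_smult_distrib[OF P one_carrier_mat] mult_smult_distrib[OF P D]
        right_mult_one_mat)
  finally have "P * (a \<cdot>\<^sub>m 1\<^sub>m n + b \<cdot>\<^sub>m D) * Q = (a \<cdot>\<^sub>m P + b \<cdot>\<^sub>m (P * D)) * Q"
    by simp
  also have "\<dots> = (a \<cdot>\<^sub>m P) * Q + (b \<cdot>\<^sub>m (P * D)) * Q"
    using P Q D by (intro add_mult_distrib_mat) auto
  also have "\<dots> = a \<cdot>\<^sub>m 1\<^sub>m n + b \<cdot>\<^sub>m (P * D * Q)"
    by (simp only: mult_smult_assoc_mat[OF P Q] PQ mult_smult_assoc_mat[OF mult_carrier_mat[OF P D] Q])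
  finally show ?thesis .
qed

lemma unitary_conj_mult:
  assumes U: "unitary_op n U" and X: "X \<in> carrier_mat n n" and Y: "Y \<in> carrier_mat n n"
  shows "(U * X * mat_adjoint U) * (U * Y * mat_adjoint U) = U * (X * Y) * mat_adjoint U"
proof -
  note UU = unitary_opD[OF U]
  have "mat_adjoint U * (U * Y * mat_adjoint U) = mat_adjoint U * (U * (Y * mat_adjoint U))"
    by (simp only: assoc_mult_mat[OF UU(1) Y UU(2)])
  also have "\<dots> = Y * mat_adjoint U"
    using Y by (intro unitary_adjoint_mult_cancel[OF U]) simp
  finally have cancel: "mat_adjoint U * (U * Y * mat_adjoint U) = Y * mat_adjoint U" .
  have "(U * X * mat_adjoint U) * (U * Y * mat_adjoint U)
      = (U * X) * (mat_adjoint U * (U * Y * mat_adjoint U))"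
    by (rule assoc_mult_mat[OF mult_carrier_mat[OF UU(1) X] UU(2)
        mult_carrier_mat[OF mult_carrier_mat[OF UU(1) Y] UU(2)]])
  also have "\<dots> = (U * X) * (Y * mat_adjoint U)" by (simp only: cancel)
  also have "\<dots> = U * (X * Y) * mat_adjoint U"
    using UU X Y by (simp only: assoc_mult_mat[OF UU(1) X mult_carrier_mat[OF Y UU(2)]]
        assoc_mult_mat[OF X Y UU(2)] assoc_mult_mat[OF UU(1) mult_carrier_mat[OF X Y] UU(2)])
  finally show ?thesis .
qed

lemma unitary_conj_eq_smult_one:
  assumes U: "unitary_op n U" and X: "X \<in> carrier_mat n n"
    and eq: "U * X * mat_adjoint U = c \<cdot>\<^sub>m 1\<^sub>m n"
  shows "X = c \<cdot>\<^sub>m 1\<^sub>m n"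
proof -
  note UU = unitary_opD[OF U]
  have "X * mat_adjoint U = mat_adjoint U * (U * (X * mat_adjoint U))"
    using X by (intro unitary_adjoint_mult_cancel[OF U, symmetric]) simp
  also have "\<dots> = mat_adjoint U * (c \<cdot>\<^sub>m 1\<^sub>m n)"
    using eq by (simp only: assoc_mult_mat[OF UU(1) X UU(2), symmetric])
  also have "\<dots> = c \<cdot>\<^sub>m mat_adjoint U"
    using UU(2) by (simp add: mult_smult_distrib[OF UU(2) one_carrier_mat] right_mult_one_mat)
  finally have XU: "X * mat_adjoint U = c \<cdot>\<^sub>m mat_adjoint U" .
  have "X = X * (mat_adjoint U * U)"
    using X UU(3) by (simp add: right_mult_one_mat)
  also have "\<dots> = (c \<cdot>\<^sub>m mat_adjoint U) * U"
    by (simp only: assoc_mult_mat[OF X UU(2) UU(1), symmetric] XU)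
  also have "\<dots> = c \<cdot>\<^sub>m 1\<^sub>m n"
    by (simp only: mult_smult_assoc_mat[OF UU(2) UU(1)] UU(3))
  finally show ?thesis .
qed

section \<open>The algebra spanned by 1 and a spin involution\<close>

definition mat2 :: "complex \<Rightarrow> complex \<Rightarrow> complex \<Rightarrow> complex \<Rightarrow> complex mat" where
  "mat2 a b c d = mat 2 2 (\<lambda>(i, j). if i = 0 then (if j = 0 then a else b) else (if j = 0 then c else d))"

lemma less_2_iff: "(i::nat) < 2 \<longleftrightarrow> i = 0 \<or> i = 1"
  by auto

lemma mat2_carrier [simp]: "mat2 a b c d \<in> carrier_mat 2 2"
  and mat2_dim [simp]: "dim_row (mat2 a b c d) = 2" "dim_col (mat2 a b c d) = 2"
  by (auto simp: mat2_def)

lemma mat2_index [simp]: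
  "mat2 a b c d $$ (0, 0) = a" "mat2 a b c d $$ (0, 1) = b"
  "mat2 a b c d $$ (1, 0) = c" "mat2 a b c d $$ (1, 1) = d"
  "mat2 a b c d $$ (0, Suc 0) = b" "mat2 a b c d $$ (Suc 0, 0) = c" "mat2 a b c d $$ (Suc 0, Suc 0) = d"
  by (auto simp: mat2_def)

lemma mat2_cases:
  assumes "A \<in> carrier_mat 2 2"
  obtains a b c d where "A = mat2 a b c d"
proof
  show "A = mat2 (A $$ (0, 0)) (A $$ (0, 1)) (A $$ (1, 0)) (A $$ (1, 1))"
    using assms by (intro eq_matI) (auto simp: mat2_def less_2_iff)
qed

lemma mat2_eq_iff [simp]: "mat2 a b c d = mat2 a' b' c' d' \<longleftrightarrow> a = a' \<and> b = b' \<and> c = c' \<and> d = d'"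
  by (metis mat2_index(1-4))

lemma mat2_mult [simp]:
  "mat2 a b c d * mat2 a' b' c' d' = mat2 (a*a' + b*c') (a*b' + b*d') (c*a' + d*c') (c*b' + d*d')"
  by (rule eq_matI) (auto simp: less_2_iff scalar_prod_def mat2_def numeral_2_eq_2)

lemma mat2_add [simp]: "mat2 a b c d + mat2 a' b' c' d' = mat2 (a+a') (b+b') (c+c') (d+d')"
  and mat2_diff [simp]: "mat2 a b c d - mat2 a' b' c' d' = mat2 (a-a') (b-b') (c-c') (d-d')"
  and mat2_uminus [simp]: "- mat2 a b c d = mat2 (-a) (-b) (-c) (-d)"
  and mat2_smult [simp]: "k \<cdot>\<^sub>m mat2 a b c d = mat2 (k*a) (k*b) (k*c) (k*d)"
  by (rule eq_matI; auto simp: less_2_iff mat2_def)+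

lemma mat2_adjoint [simp]: "mat_adjoint (mat2 a b c d) = mat2 (cnj a) (cnj c) (cnj b) (cnj d)"
  by (rule eq_matI) (auto simp: less_2_iff mat2_def mat_adjoint_def mat_of_rows_index cols_def)

lemma one_mat2: "1\<^sub>m 2 = mat2 1 0 0 1"
  and zero_mat2: "0\<^sub>m 2 2 = mat2 0 0 0 0"
  and diag_op_mat2: "diag_op 2 d = mat2 (d 0) 0 0 (d 1)"
  by (rule eq_matI; auto simp: less_2_iff mat2_def diag_op_def)+

lemma mat_unit_mat2:
  "mat_unit 2 0 0 = mat2 1 0 0 0" "mat_unit 2 0 (Suc 0) = mat2 0 1 0 0"
  "mat_unit 2 (Suc 0) 0 = mat2 0 0 1 0" "mat_unit 2 (Suc 0) (Suc 0) = mat2 0 0 0 1"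
  by (rule eq_matI; auto simp: less_2_iff mat2_def mat_unit_def)+

lemma op_trace_mat2 [simp]: "op_trace 2 (mat2 a b c d) = a + d"
  by (simp add: op_trace_def numeral_2_eq_2)

lemma unitary_op_mat2_iff: "unitary_op 2 (mat2 a b c d) \<longleftrightarrow>
  cnj a * a + cnj c * c = 1 \<and> cnj a * b + cnj c * d = 0 \<and> cnj b * a + cnj d * c = 0 \<and> cnj b * b + cnj d * d = 1 \<and>
  a * cnj a + b * cnj b = 1 \<and> a * cnj c + b * cnj d = 0 \<and> c * cnj a + d * cnj b = 0 \<and> c * cnj c + d * cnj d = 1"
  by (simp add: unitary_op_def one_mat2)

lemma hermitian_op_mat2_iff: "hermitian_op 2 (mat2 a b c d) \<longleftrightarrow> cnj a = a \<and> cnj c = b \<and> cnj d = d"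
  by (auto simp: hermitian_op_def)

definition spin_op :: "real \<Rightarrow> complex \<Rightarrow> complex mat" where
  "spin_op p q = mat2 (of_real p) q (cnj q) (- of_real p)"

definition spin_comb :: "complex \<Rightarrow> complex \<Rightarrow> real \<Rightarrow> complex \<Rightarrow> complex mat" where
  "spin_comb a b p q = a \<cdot>\<^sub>m 1\<^sub>m 2 + b \<cdot>\<^sub>m spin_op p q"

lemma spin_op_carrier [simp]: "spin_op p q \<in> carrier_mat 2 2"
  by (simp add: spin_op_def)

lemma spin_comb_mat2:
  "spin_comb a b p q = mat2 (a + b * of_real p) (b * q) (b * cnj q) (a - b * of_real p)"
  by (simp add: spin_comb_def spin_op_def one_mat2)

lemma commutator_carrier:
  "A \<in> carrier_mat n n \<Longrightarrow> B \<in> carrier_mat n n \<Longrightarrow> commutator A B \<in> carrier_mat n n"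
  unfolding commutator_def by (metis minus_carrier_mat mult_carrier_mat)

lemma spin_comb_carrier [simp]: "spin_comb a b p q \<in> carrier_mat 2 2"
  by (simp add: spin_comb_mat2)

lemma unit_axis_complex:
  assumes "p\<^sup>2 + (cmod q)\<^sup>2 = 1"
  shows "of_real p * of_real p + q * cnj q = (1 :: complex)"
proof -
  have "q * cnj q = complex_of_real ((cmod q)\<^sup>2)"
    using complex_norm_square[of q] by simp
  then have "of_real p * of_real p + q * cnj q = complex_of_real (p\<^sup>2 + (cmod q)\<^sup>2)"
    by (simp add: power2_eq_square)
  then show ?thesis using assms by simp
qed

lemma spin_comb_mult:
  assumes "p\<^sup>2 + (cmod q)\<^sup>2 = 1"
  shows "spin_comb a b p q * spin_comb c d p q = spin_comb (a * c + b * d) (a * d + b * c) p q"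
proof -
  let ?P = "complex_of_real p"
  have "spin_comb a b p q * spin_comb c d p q
      = spin_comb (a * c + b * d * (?P * ?P + q * cnj q)) (a * d + b * c) p q"
    by (simp add: spin_comb_mat2 algebra_simps)
  then show ?thesis using unit_axis_complex[OF assms] by simp
qed

lemma spin_op_square:
  assumes "p\<^sup>2 + (cmod q)\<^sup>2 = 1"
  shows "spin_op p q * spin_op p q = 1\<^sub>m 2"
proof -
  have K: "spin_op p q = spin_comb 0 1 p q" by (simp add: spin_comb_mat2 spin_op_def)
  show ?thesis unfolding K spin_comb_mult[OF assms] by (simp add: spin_comb_mat2 one_mat2)
qed

lemma spin_comb_adjoint: "mat_adjoint (spin_comb a b p q) = spin_comb (cnj a) (cnj b) p q"
  by (simp add: spin_comb_mat2)

lemma commutator_spin_comb: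
  assumes "\<rho> \<in> carrier_mat 2 2"
  shows "commutator (spin_comb a b p q) \<rho> = b \<cdot>\<^sub>m commutator (spin_op p q) \<rho>"
proof -
  obtain x y z w where "\<rho> = mat2 x y z w" using assms by (rule mat2_cases)
  then show ?thesis by (simp add: commutator_def spin_op_def spin_comb_mat2 algebra_simps)
qed

lemma spin_op_double_commutator:
  assumes unit: "p\<^sup>2 + (cmod q)\<^sup>2 = 1" and "\<rho> \<in> carrier_mat 2 2"
  shows "commutator (spin_op p q) (commutator (spin_op p q) \<rho>)
    = 2 \<cdot>\<^sub>m \<rho> - 2 \<cdot>\<^sub>m (spin_op p q * \<rho> * spin_op p q)"
proof -
  obtain x y z w where \<rho>: "\<rho> = mat2 x y z w" using assms(2) by (rule mat2_cases)
  let ?K = "spin_op p q"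
  have "commutator ?K (commutator ?K \<rho>) = (?K * ?K) * \<rho> - 2 \<cdot>\<^sub>m (?K * \<rho> * ?K) + \<rho> * (?K * ?K)"
    unfolding \<rho> spin_op_def commutator_def by (simp add: algebra_simps)
  then show ?thesis
    unfolding spin_op_square[OF unit] \<rho> one_mat2 by (simp add: spin_op_def algebra_simps)
qed

lemma spin_op_unitary_diag:
  fixes p :: real and q :: complex
  assumes unit: "p\<^sup>2 + (cmod q)\<^sup>2 = 1"
  obtains U where "unitary_op 2 U" and "spin_op p q = U * mat2 1 0 0 (-1) * mat_adjoint U"
proof (cases "p = -1")
  case True
  then have "q = 0" using unit by simp
  with True show ?thesis
    by (intro that[of "mat2 0 1 1 0"]) (simp_all add: unitary_op_mat2_iff spin_op_def)
next
  case False
  have "p\<^sup>2 \<le> 1" using unit by (metis le_add_same_cancel1 zero_le_power2)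
  then have "p \<ge> -1" by (simp add: abs_square_le_1)
  with False have pp: "1 + p > 0" by simp
  text \<open>The columns of U are the normalised eigenvectors (1 + p, conj q) and (- q, 1 + p).\<close>
  define N where "N = sqrt (2 * (1 + p))"
  define s where "s = (1 + p) / N"
  define t where "t = 1 / N"
  have NN: "N * N = 2 * (1 + p)" using pp by (simp add: N_def)
  have "q * cnj q = 1 - of_real p * of_real p"
    using unit_axis_complex[OF unit] by (simp add: algebra_simps)
  then have qq: "q * cnj q = complex_of_real (1 - p\<^sup>2)"
    by (simp add: power2_eq_square)
  have st: "s * s = (1 + p) * (1 + p) / (N * N)" "t * t = 1 / (N * N)" "s * t = (1 + p) / (N * N)"
    unfolding s_def t_def by simp_all
  have "s * s + t * t * (1 - p\<^sup>2) = 1" "s * s - t * t * (1 - p\<^sup>2) = p"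
    unfolding st NN using pp by (simp_all add: divide_simps power2_eq_square) (simp_all add: algebra_simps)
  moreover have "2 * s * t = 1"
    unfolding mult.assoc st(3) NN using pp by simp
  ultimately
  have C: "complex_of_real s * s + t * t * (q * cnj q) = 1"
    "complex_of_real s * s - t * t * (q * cnj q) = p" "2 * complex_of_real s * t = 1"
    unfolding qq by (simp_all flip: of_real_mult of_real_add of_real_diff) (metis of_real_1 of_real_mult of_real_numeral)
  show ?thesis
  proof (rule that[of "mat2 s (- (t * q)) (t * cnj q) s"])
    show "unitary_op 2 (mat2 s (- (t * q)) (t * cnj q) s)"
      unfolding unitary_op_mat2_iff using C(1) by (simp add: algebra_simps)
    have "complex_of_real s * (t * q) + t * q * s = (2 * complex_of_real s * t) * q"
      "complex_of_real t * cnj q * s + s * (t * cnj q) = (2 * complex_of_real s * t) * cnj q"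
      by (simp_all add: algebra_simps)
    then show "spin_op p q = mat2 s (- (t * q)) (t * cnj q) s * mat2 1 0 0 (-1) * mat_adjoint (mat2 s (- (t * q)) (t * cnj q) s)"
      using C by (simp add: spin_op_def algebra_simps)
  qed
qed

lemma spin_comb_unitary_diag:
  assumes unit: "p\<^sup>2 + (cmod q)\<^sup>2 = 1"
  obtains U where "unitary_op 2 U"
    and "\<And>a b. spin_comb a b p q = U * mat2 (a + b) 0 0 (a - b) * mat_adjoint U"
proof -
  obtain U where U: "unitary_op 2 U" and K: "spin_op p q = U * mat2 1 0 0 (-1) * mat_adjoint U"
    using spin_op_unitary_diag[OF unit] .
  have "spin_comb a b p q = U * mat2 (a + b) 0 0 (a - b) * mat_adjoint U" for a b
  proof -
    have "spin_comb a b p q = a \<cdot>\<^sub>m 1\<^sub>m 2 + b \<cdot>\<^sub>m (U * mat2 1 0 0 (-1) * mat_adjoint U)"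
      by (simp only: spin_comb_def K)
    also have "\<dots> = U * (a \<cdot>\<^sub>m 1\<^sub>m 2 + b \<cdot>\<^sub>m mat2 1 0 0 (-1)) * mat_adjoint U"
      by (rule similarity_affine[OF unitary_opD(1,2,4)[OF U], symmetric]) simp
    also have "a \<cdot>\<^sub>m 1\<^sub>m 2 + b \<cdot>\<^sub>m mat2 1 0 0 (-1) = mat2 (a + b) 0 0 (a - b)"
      by (simp add: one_mat2)
    finally show ?thesis .
  qed
  with U show ?thesis by (rule that)
qed

text \<open>Applied to the eigenvalues d of m + r K, which satisfy (d - m)^2 = r^2.\<close>

lemma spin_eigenvalue_cases:
  fixes d m r :: real and f :: "real \<Rightarrow> complex"
  assumes "(d - m)\<^sup>2 = r\<^sup>2" and "r \<ge> 0"
  shows "d = m + r * sgn (d - m)"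
    and "f d = (f (m + r) + f (m - r)) / 2 + (f (m + r) - f (m - r)) / 2 * of_real (sgn (d - m))"
proof -
  have "d - m = r \<or> d - m = - r" using assms(1) by (simp add: power2_eq_iff)
  then consider "r = 0" "d = m" | "r > 0" "d = m + r" | "r > 0" "d = m - r"
    using assms(2) by fastforce
  then have "d = m + r * sgn (d - m) \<and>
      f d = (f (m + r) + f (m - r)) / 2 + (f (m + r) - f (m - r)) / 2 * of_real (sgn (d - m))"
  proof cases
    case 1
    then show ?thesis by simp
  next
    case 2
    then show ?thesis by (simp add: field_simps)
  next
    case 3
    then have "m - r = d" by simp
    with 3 show ?thesis by (simp add: field_simps)
  qed
  then show "d = m + r * sgn (d - m)"
    and "f d = (f (m + r) + f (m - r)) / 2 + (f (m + r) - f (m - r)) / 2 * of_real (sgn (d - m))"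
    by simp_all
qed

lemma spin_comb_eigenvalues:
  fixes m r p :: real and d :: "nat \<Rightarrow> real"
  assumes unit: "p\<^sup>2 + (cmod q)\<^sup>2 = 1" and U: "unitary_op 2 U"
    and A: "spin_comb (of_real m) (of_real r) p q = U * diag_op 2 (\<lambda>i. of_real (d i)) * mat_adjoint U"
  shows "(d 0 - m)\<^sup>2 = r\<^sup>2" and "(d 1 - m)\<^sup>2 = r\<^sup>2"
proof -
  note UU = unitary_opD[OF U]
  define E where "E = mat2 (of_real (d 0 - m)) 0 0 (of_real (d 1 - m))"
  have "U * E * mat_adjoint U
      = U * (- of_real m \<cdot>\<^sub>m 1\<^sub>m 2 + 1 \<cdot>\<^sub>m diag_op 2 (\<lambda>i. of_real (d i))) * mat_adjoint U"
    by (simp add: E_def diag_op_mat2 one_mat2)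
  also have "\<dots> = - of_real m \<cdot>\<^sub>m 1\<^sub>m 2 + 1 \<cdot>\<^sub>m spin_comb (of_real m) (of_real r) p q"
    unfolding A by (rule similarity_affine[OF UU(1,2,4)]) (simp add: diag_op_mat2)
  also have "\<dots> = spin_comb 0 (of_real r) p q"
    by (simp add: spin_comb_mat2 one_mat2)
  finally have "U * E * mat_adjoint U = spin_comb 0 (of_real r) p q" .
  then have "U * (E * E) * mat_adjoint U = spin_comb 0 (of_real r) p q * spin_comb 0 (of_real r) p q"
    using unitary_conj_mult[OF U, of E E] by (simp add: E_def)
  also have "\<dots> = of_real (r\<^sup>2) \<cdot>\<^sub>m 1\<^sub>m 2"
    unfolding spin_comb_mult[OF unit] by (simp add: spin_comb_mat2 one_mat2 power2_eq_square)
  finally have "U * (E * E) * mat_adjoint U = of_real (r\<^sup>2) \<cdot>\<^sub>m 1\<^sub>m 2" .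
  then have "E * E = of_real (r\<^sup>2) \<cdot>\<^sub>m 1\<^sub>m 2"
    by (rule unitary_conj_eq_smult_one[OF U, rotated]) (simp add: E_def)
  then have "complex_of_real ((d 0 - m)\<^sup>2) = of_real (r\<^sup>2)" "complex_of_real ((d 1 - m)\<^sup>2) = of_real (r\<^sup>2)"
    by (simp_all add: E_def one_mat2 power2_eq_square)
  then show "(d 0 - m)\<^sup>2 = r\<^sup>2" "(d 1 - m)\<^sup>2 = r\<^sup>2"
    using of_real_eq_iff by blast+
qed

lemma spin_comb_diagonalisation_apply:
  fixes m r p :: real and f :: "real \<Rightarrow> complex" and d :: "nat \<Rightarrow> real"
  assumes unit: "p\<^sup>2 + (cmod q)\<^sup>2 = 1" and r: "r \<ge> 0" and U: "unitary_op 2 U"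
    and A: "spin_comb (of_real m) (of_real r) p q = U * diag_op 2 (\<lambda>i. of_real (d i)) * mat_adjoint U"
  defines "u \<equiv> (f (m + r) + f (m - r)) / 2" and "v \<equiv> (f (m + r) - f (m - r)) / 2"
  shows "U * diag_op 2 (\<lambda>i. f (d i)) * mat_adjoint U = spin_comb u v p q"
proof -
  note UU = unitary_opD[OF U]
  define S where "S = mat2 (of_real (sgn (d 0 - m))) 0 0 (of_real (sgn (d 1 - m)))"
  define Y where "Y = U * S * mat_adjoint U"
  note eig = spin_eigenvalue_cases(1)[OF spin_comb_eigenvalues(1)[OF unit U A] r]
    spin_eigenvalue_cases(2)[OF spin_comb_eigenvalues(1)[OF unit U A] r, of f]
    spin_eigenvalue_cases(1)[OF spin_comb_eigenvalues(2)[OF unit U A] r]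
    spin_eigenvalue_cases(2)[OF spin_comb_eigenvalues(2)[OF unit U A] r, of f]
  have D: "diag_op 2 (\<lambda>i. complex_of_real (d i)) = of_real m \<cdot>\<^sub>m 1\<^sub>m 2 + of_real r \<cdot>\<^sub>m S"
    using eig(1,3) by (simp add: diag_op_mat2 one_mat2 S_def) (metis of_real_add of_real_mult)
  have AY: "spin_comb (of_real m) (of_real r) p q = of_real m \<cdot>\<^sub>m 1\<^sub>m 2 + of_real r \<cdot>\<^sub>m Y"
    unfolding A Y_def D by (rule similarity_affine[OF UU(1,2,4)]) (simp add: S_def)
  have F: "diag_op 2 (\<lambda>i. f (d i)) = u \<cdot>\<^sub>m 1\<^sub>m 2 + v \<cdot>\<^sub>m S"
    using eig(2,4) by (simp add: diag_op_mat2 one_mat2 S_def u_def v_def)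
  have BY: "U * diag_op 2 (\<lambda>i. f (d i)) * mat_adjoint U = u \<cdot>\<^sub>m 1\<^sub>m 2 + v \<cdot>\<^sub>m Y"
    unfolding Y_def F by (rule similarity_affine[OF UU(1,2,4)]) (simp add: S_def)
  have "Y \<in> carrier_mat 2 2"
    unfolding Y_def S_def by (rule mult_carrier_mat[OF mult_carrier_mat[OF UU(1) mat2_carrier] UU(2)])
  then obtain y0 y1 y2 y3 where Y: "Y = mat2 y0 y1 y2 y3" by (rule mat2_cases)
  show ?thesis
  proof (cases "r = 0")
    case True
    then show ?thesis by (simp add: BY Y v_def spin_comb_mat2 one_mat2)
  next
    case False
    then have r0: "complex_of_real r \<noteq> 0" by simp
    have "of_real r * y0 = of_real r * of_real p" "of_real r * y1 = of_real r * q"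
      "of_real r * y2 = of_real r * cnj q" "of_real r * y3 = of_real r * (- of_real p)"
      using AY by (auto simp: Y spin_comb_mat2 one_mat2)
    then have "y0 = of_real p" "y1 = q" "y2 = cnj q" "y3 = - of_real p"
      using mult_left_cancel[OF r0] by blast+
    then show ?thesis by (simp add: BY Y spin_comb_mat2 one_mat2 algebra_simps)
  qed
qed

lemma matfun_spin_comb:
  fixes m r p :: real and f :: "real \<Rightarrow> complex"
  assumes unit: "p\<^sup>2 + (cmod q)\<^sup>2 = 1" and r: "r \<ge> 0"
  defines "u \<equiv> (f (m + r) + f (m - r)) / 2" and "v \<equiv> (f (m + r) - f (m - r)) / 2"
  shows "matfun 2 f (spin_comb (of_real m) (of_real r) p q) = spin_comb u v p q"
proof -
  let ?A = "spin_comb (of_real m) (of_real r) p q"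
  have "\<exists>U d. unitary_op 2 U \<and> ?A = U * diag_op 2 (\<lambda>i. complex_of_real (d i)) * mat_adjoint U \<and>
      spin_comb u v p q = U * diag_op 2 (\<lambda>i. f (d i)) * mat_adjoint U"
  proof -
    obtain U where U: "unitary_op 2 U"
      and diag: "\<And>a b. spin_comb a b p q = U * mat2 (a + b) 0 0 (a - b) * mat_adjoint U"
      using spin_comb_unitary_diag[OF unit] by blast
    have "u + v = f (m + r)" "u - v = f (m - r)" by (simp_all add: u_def v_def field_simps)
    then show ?thesis using U
      by (intro exI[of _ U] exI[of _ "\<lambda>i. if i = 0 then m + r else m - r"]) (simp add: diag diag_op_mat2)
  qed
  moreover have "B = spin_comb u v p q"
    if "\<exists>U d. unitary_op 2 U \<and> ?A = U * diag_op 2 (\<lambda>i. complex_of_real (d i)) * mat_adjoint U \<and>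
      B = U * diag_op 2 (\<lambda>i. f (d i)) * mat_adjoint U" for B
    using that spin_comb_diagonalisation_apply[OF unit r] unfolding u_def v_def by blast
  ultimately show ?thesis
    unfolding matfun_def by (intro the_equality) blast+
qed

lemma mat_sum_cong: "(\<And>\<alpha>. \<alpha> \<in> I \<Longrightarrow> F \<alpha> = G \<alpha>) \<Longrightarrow> mat_sum n F I = mat_sum n G I"
  unfolding mat_sum_def by (metis (mono_tags, lifting) sum.cong)

lemma mat_sum_smult_add:
  assumes "X \<in> carrier_mat n n" "Y \<in> carrier_mat n n"
  shows "mat_sum n (\<lambda>\<alpha>. c \<alpha> \<cdot>\<^sub>m X + d \<alpha> \<cdot>\<^sub>m Y) I = (\<Sum>\<alpha>\<in>I. c \<alpha>) \<cdot>\<^sub>m X + (\<Sum>\<alpha>\<in>I. d \<alpha>) \<cdot>\<^sub>m Y"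
  by (rule eq_matI) (use assms in \<open>auto simp: mat_sum_def sum.distrib sum_distrib_right\<close>)

lemma dissipator_spin_comb:
  fixes u v q :: complex and p :: real
  assumes unit: "p\<^sup>2 + (cmod q)\<^sup>2 = 1" and \<rho>: "\<rho> \<in> carrier_mat 2 2"
  defines "G \<equiv> spin_comb u v p q" and "K \<equiv> spin_op p q"
  shows "G * \<rho> * mat_adjoint G - (1/2) \<cdot>\<^sub>m (mat_adjoint G * G * \<rho> + \<rho> * mat_adjoint G * G)
    = (\<i> * of_real (Im (v * cnj u))) \<cdot>\<^sub>m commutator K \<rho>
      + of_real ((cmod v)\<^sup>2 / 2) \<cdot>\<^sub>m (- commutator K (commutator K \<rho>))"
proof -
  obtain x y z w where \<rho>_eq: "\<rho> = mat2 x y z w" using \<rho> by (rule mat2_cases)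
  have GG: "mat_adjoint G * G = spin_comb (cnj u * u + cnj v * v) (cnj u * v + cnj v * u) p q"
    unfolding G_def spin_comb_adjoint spin_comb_mult[OF unit] ..
  have "G \<in> carrier_mat 2 2" "mat_adjoint G \<in> carrier_mat 2 2"
    by (simp_all add: G_def spin_comb_mat2)
  then have assoc: "\<rho> * mat_adjoint G * G = \<rho> * (mat_adjoint G * G)"
    using \<rho> by (intro assoc_mult_mat)
  have im: "\<i> * complex_of_real (Im (v * cnj u)) = (v * cnj u - u * cnj v) / 2"
    by (simp add: complex_eq_iff)
  have sq: "complex_of_real ((cmod v)\<^sup>2 / 2) = v * cnj v / 2"
    using complex_norm_square[of v] by simp
  show ?thesis
    unfolding assoc GG K_def im sq spin_op_double_commutator[OF unit \<rho>]
    unfolding G_def \<rho>_eq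
    by (simp add: spin_comb_mat2 spin_op_def commutator_def field_simps)
qed

lemma lindbladian_spin_comb:
  fixes m r p :: real
  assumes unit: "p\<^sup>2 + (cmod q)\<^sup>2 = 1"
    and \<Gamma>: "\<And>\<alpha>. \<alpha> \<in> I \<Longrightarrow> \<Gamma> \<alpha> = spin_comb (u \<alpha>) (v \<alpha>) p q"
    and \<rho>: "\<rho> \<in> carrier_mat 2 2"
  defines "K \<equiv> spin_op p q"
  shows "lindbladian 2 (spin_comb (of_real m) (of_real r) p q) I \<Gamma> \<rho>
    = (- \<i> * of_real (r - (\<Sum>\<alpha>\<in>I. Im (v \<alpha> * cnj (u \<alpha>))))) \<cdot>\<^sub>m commutator K \<rho>
      + of_real ((\<Sum>\<alpha>\<in>I. (cmod (v \<alpha>))\<^sup>2) / 2) \<cdot>\<^sub>m (- commutator K (commutator K \<rho>))"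
proof -
  let ?X = "commutator K \<rho>" and ?Y = "- commutator K (commutator K \<rho>)"
  have XY: "?X \<in> carrier_mat 2 2" "?Y \<in> carrier_mat 2 2"
    using \<rho> by (simp_all add: K_def commutator_carrier uminus_carrier_mat)
  have "mat_sum 2 (\<lambda>\<alpha>. \<Gamma> \<alpha> * \<rho> * mat_adjoint (\<Gamma> \<alpha>)
      - (1/2) \<cdot>\<^sub>m (mat_adjoint (\<Gamma> \<alpha>) * \<Gamma> \<alpha> * \<rho> + \<rho> * mat_adjoint (\<Gamma> \<alpha>) * \<Gamma> \<alpha>)) I
    = mat_sum 2 (\<lambda>\<alpha>. (\<i> * of_real (Im (v \<alpha> * cnj (u \<alpha>)))) \<cdot>\<^sub>m ?X
      + of_real ((cmod (v \<alpha>))\<^sup>2 / 2) \<cdot>\<^sub>m ?Y) I"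
    by (rule mat_sum_cong) (simp add: \<Gamma> K_def dissipator_spin_comb[OF unit \<rho>])
  also have "\<dots> = (\<i> * of_real (\<Sum>\<alpha>\<in>I. Im (v \<alpha> * cnj (u \<alpha>)))) \<cdot>\<^sub>m ?X
      + of_real ((\<Sum>\<alpha>\<in>I. (cmod (v \<alpha>))\<^sup>2) / 2) \<cdot>\<^sub>m ?Y"
    unfolding mat_sum_smult_add[OF XY] by (simp add: sum_distrib_left sum_divide_distrib)
  finally show ?thesis
    unfolding lindbladian_def commutator_spin_comb[OF \<rho>] K_def[symmetric]
    by (intro eq_matI) (use XY in \<open>auto simp: algebra_simps\<close>)
qed

lemma signed_sqrt_op_spin_comb:
  fixes w p :: real
  assumes unit: "p\<^sup>2 + (cmod q)\<^sup>2 = 1"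
  shows "signed_sqrt_op 2 (spin_comb 0 (of_real w) p q) = spin_comb 0 (of_real (sgn w * sqrt \<bar>w\<bar>)) p q"
proof -
  define e :: real where "e = (if w < 0 then -1 else 1)"
  have e: "e * e = 1" "w = \<bar>w\<bar> * e" "sgn w * sqrt \<bar>w\<bar> = e * (sgn \<bar>w\<bar> * sqrt \<bar>w\<bar>)"
    by (auto simp: e_def sgn_if)
  have unit': "(e * p)\<^sup>2 + (cmod (of_real e * q))\<^sup>2 = 1"
    using unit e(1) by (simp add: power_mult_distrib norm_mult e_def)
  have H: "spin_comb 0 (of_real w) p q = spin_comb (of_real 0) (of_real \<bar>w\<bar>) (e * p) (of_real e * q)"
    by (subst e(2)) (simp add: spin_comb_mat2 algebra_simps)
  let ?f = "\<lambda>x. complex_of_real (sgn x * sqrt \<bar>x\<bar>)"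
  have "signed_sqrt_op 2 (spin_comb 0 (of_real w) p q)
      = spin_comb ((?f (0 + \<bar>w\<bar>) + ?f (0 - \<bar>w\<bar>)) / 2) ((?f (0 + \<bar>w\<bar>) - ?f (0 - \<bar>w\<bar>)) / 2)
          (e * p) (of_real e * q)"
    unfolding H signed_sqrt_op_def by (rule matfun_spin_comb[OF unit' abs_ge_zero])
  also have "\<dots> = spin_comb 0 (of_real (sgn w * sqrt \<bar>w\<bar>)) p q"
    unfolding e(3) by (simp add: spin_comb_mat2 algebra_simps)
  finally show ?thesis .
qed

lemma order_distinct_linear_factors:
  fixes a b x :: "'a :: idom"
  assumes "a \<noteq> b" and "poly ([:- a, 1:] * [:- b, 1:]) x = 0"
  shows "Polynomial.order x ([:- a, 1:] * [:- b, 1:]) = 1"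
proof -
  have order_linear: "Polynomial.order x [:- c, 1:] = (if x = c then 1 else 0)" for c
    using order_power_n_n[of x 1] by (auto intro: order_0I)
  have "poly [:- a, 1:] x = 0 \<or> poly [:- b, 1:] x = 0"
    using assms(2) by (simp only: poly_mult mult_eq_0_iff)
  then have "x = a \<or> x = b" by simp
  moreover have nz: "[:- a, 1:] * [:- b, 1:] \<noteq> 0" by (simp del: mult_pCons_left mult_pCons_right)
  ultimately show ?thesis
    using assms(1) unfolding order_mult[OF nz] order_linear by auto
qed

lemma nondegenerate_spin_comb:
  fixes w p :: real
  assumes unit: "p\<^sup>2 + (cmod q)\<^sup>2 = 1" and w: "w \<noteq> 0"
  shows "nondegenerate_op 2 (spin_comb 0 (of_real w) p q)"
proof -
  let ?H = "spin_comb 0 (of_real w) p q"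
  obtain U where U: "unitary_op 2 U"
    and diag: "\<And>a b. spin_comb a b p q = U * mat2 (a + b) 0 0 (a - b) * mat_adjoint U"
    using spin_comb_unitary_diag[OF unit] by blast
  note UU = unitary_opD[OF U]
  have "similar_mat ?H (mat2 (of_real w) 0 0 (- of_real w))"
  proof (rule similar_matI)
    show "{?H, mat2 (of_real w) 0 0 (- of_real w), U, mat_adjoint U} \<subseteq> carrier_mat 2 2"
      using UU by (simp add: spin_comb_mat2)
    show "?H = U * mat2 (of_real w) 0 0 (- of_real w) * mat_adjoint U"
      using diag[of 0 "of_real w"] by simp
  qed (use UU in simp_all)
  then have "char_poly ?H = char_poly (mat2 (of_real w) 0 0 (- of_real w))"
    by (rule char_poly_similar)
  also have "\<dots> = [:- of_real w, 1:] * [:- (- of_real w), 1:]"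
    by (subst char_poly_upper_triangular[of _ 2])
      (auto simp: upper_triangular_def less_Suc_eq diag_mat_def eval_nat_numeral upt_rec)
  finally have cp: "char_poly ?H = [:- of_real w, 1:] * [:- (- of_real w), 1:]" .
  have "Polynomial.order \<mu> (char_poly ?H) = 1" if "eigenvalue ?H \<mu>" for \<mu>
    using that w unfolding cp eigenvalue_root_char_poly[OF spin_comb_carrier]
    by (intro order_distinct_linear_factors) (auto simp: cp)
  then show ?thesis by (simp add: nondegenerate_op_def spin_comb_mat2)
qed

section \<open>Superoperator matrices\<close>

text \<open>Kronecker product of 2 x 2 matrices, indexed like superop_mat: k = 2 i + j.\<close>

definition kron2 :: "complex mat \<Rightarrow> complex mat \<Rightarrow> complex mat" where
  "kron2 A B = mat 4 4 (\<lambda>(k, l). A $$ (k div 2, l div 2) * B $$ (k mod 2, l mod 2))"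

lemma less_4_iff: "(k::nat) < 4 \<longleftrightarrow> k = 0 \<or> k = 1 \<or> k = 2 \<or> k = 3"
  by auto

lemma sum_4: "(\<Sum>i\<in>{0..<4::nat}. f i) = f 0 + f 1 + f 2 + f 3"
  by (simp add: eval_nat_numeral atLeast0LessThan lessThan_Suc add.assoc add.commute add.left_commute)

lemma kron2_carrier [simp]: "kron2 A B \<in> carrier_mat 4 4"
  by (simp add: kron2_def)

lemma transpose_mat2 [simp]: "transpose_mat (mat2 a b c d) = mat2 a c b d"
  by (rule eq_matI) (auto simp: less_2_iff mat2_def)

lemma kron2_mult:
  assumes "A \<in> carrier_mat 2 2" "B \<in> carrier_mat 2 2" "C \<in> carrier_mat 2 2" "D \<in> carrier_mat 2 2"
  shows "kron2 A B * kron2 C D = kron2 (A * C) (B * D)"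
proof -
  obtain a0 a1 a2 a3 where "A = mat2 a0 a1 a2 a3" using assms(1) by (rule mat2_cases)
  moreover obtain b0 b1 b2 b3 where "B = mat2 b0 b1 b2 b3" using assms(2) by (rule mat2_cases)
  moreover obtain c0 c1 c2 c3 where "C = mat2 c0 c1 c2 c3" using assms(3) by (rule mat2_cases)
  moreover obtain d0 d1 d2 d3 where "D = mat2 d0 d1 d2 d3" using assms(4) by (rule mat2_cases)
  ultimately show ?thesis
    by (intro eq_matI) (auto simp: less_4_iff kron2_def scalar_prod_def sum_4 algebra_simps)
qed

lemma kron2_one: "kron2 (1\<^sub>m 2) (1\<^sub>m 2) = 1\<^sub>m 4"
  by (rule eq_matI) (auto simp: less_4_iff kron2_def)

lemma superop_mat_carrier [simp]: "superop_mat n L \<in> carrier_mat (n * n) (n * n)"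
  by (simp add: superop_mat_def)

lemma superop_mat_cong:
  assumes "\<And>\<rho>. \<rho> \<in> carrier_mat n n \<Longrightarrow> L \<rho> = L' \<rho>"
  shows "superop_mat n L = superop_mat n L'"
proof -
  have "mat_unit n (l div n) (l mod n) \<in> carrier_mat n n" for l
    by (simp add: mat_unit_def)
  then show ?thesis unfolding superop_mat_def by (simp add: assms)
qed

lemma superop_mat_double_commutator:
  assumes unit: "p\<^sup>2 + (cmod q)\<^sup>2 = 1"
  defines "K \<equiv> spin_op p q"
  shows "superop_mat 2 (\<lambda>\<rho>. c \<cdot>\<^sub>m (- commutator K (commutator K \<rho>)))
    = (- 2 * c) \<cdot>\<^sub>m 1\<^sub>m 4 + (2 * c) \<cdot>\<^sub>m kron2 K (transpose_mat K)"
proof -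
  have "superop_mat 2 (\<lambda>\<rho>. c \<cdot>\<^sub>m (- commutator K (commutator K \<rho>)))
      = superop_mat 2 (\<lambda>\<rho>. c \<cdot>\<^sub>m (2 \<cdot>\<^sub>m (K * \<rho> * K) - 2 \<cdot>\<^sub>m \<rho>))"
  proof (rule superop_mat_cong)
    fix \<rho> :: "complex mat" assume \<rho>: "\<rho> \<in> carrier_mat 2 2"
    then obtain x y z w where "\<rho> = mat2 x y z w" by (rule mat2_cases)
    then show "c \<cdot>\<^sub>m (- commutator K (commutator K \<rho>)) = c \<cdot>\<^sub>m (2 \<cdot>\<^sub>m (K * \<rho> * K) - 2 \<cdot>\<^sub>m \<rho>)"
      unfolding K_def spin_op_double_commutator[OF unit \<rho>] by (simp add: spin_op_def algebra_simps)
  qed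
  also have "\<dots> = (- 2 * c) \<cdot>\<^sub>m 1\<^sub>m 4 + (2 * c) \<cdot>\<^sub>m kron2 K (transpose_mat K)"
    by (rule eq_matI)
      (auto simp: less_4_iff superop_mat_def kron2_def K_def spin_op_def mat_unit_mat2 algebra_simps)
  finally show ?thesis .
qed

lemma superop_mat_double_commutator_similar:
  assumes unit: "p\<^sup>2 + (cmod q)\<^sup>2 = 1"
  shows "similar_mat (superop_mat 2 (\<lambda>\<rho>. c \<cdot>\<^sub>m (- commutator (spin_op p q) (commutator (spin_op p q) \<rho>))))
    ((- 2 * c) \<cdot>\<^sub>m 1\<^sub>m 4 + (2 * c) \<cdot>\<^sub>m kron2 (mat2 1 0 0 (-1)) (mat2 1 0 0 (-1)))"
proof -
  let ?K = "spin_op p q" and ?Z = "mat2 1 0 0 (-1)"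
  obtain U where U: "unitary_op 2 U" and K: "?K = U * ?Z * mat_adjoint U"
    using spin_op_unitary_diag[OF unit] .
  note UU = unitary_opD[OF U]
  obtain a b c' d where U_eq: "U = mat2 a b c' d" using UU(1) by (rule mat2_cases)
  text \<open>P and Q are the matrices of the mutually inverse conjugations by U and by its adjoint.\<close>
  define P where "P = kron2 U (transpose_mat (mat_adjoint U))"
  define Q where "Q = kron2 (mat_adjoint U) (transpose_mat U)"
  have "transpose_mat (mat_adjoint U) * transpose_mat U = 1\<^sub>m 2"
    by (simp only: transpose_mult[OF UU(1) UU(2), symmetric] UU(4) transpose_one)
  moreover have "transpose_mat U * transpose_mat (mat_adjoint U) = 1\<^sub>m 2"
    by (simp only: transpose_mult[OF UU(2) UU(1), symmetric] UU(3) transpose_one)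
  ultimately have PQ: "P * Q = 1\<^sub>m 4" and QP: "Q * P = 1\<^sub>m 4"
    unfolding P_def Q_def using UU by (simp_all add: kron2_mult kron2_one)
  have PQ_carrier: "P \<in> carrier_mat 4 4" "Q \<in> carrier_mat 4 4"
    by (simp_all add: P_def Q_def)
  have KK: "kron2 ?K (transpose_mat ?K) = P * kron2 ?Z ?Z * Q"
    unfolding P_def Q_def K using UU by (simp add: kron2_mult transpose_mult U_eq mult.commute)
  have M: "superop_mat 2 (\<lambda>\<rho>. c \<cdot>\<^sub>m (- commutator ?K (commutator ?K \<rho>)))
      = P * ((- 2 * c) \<cdot>\<^sub>m 1\<^sub>m 4 + (2 * c) \<cdot>\<^sub>m kron2 ?Z ?Z) * Q"
    unfolding superop_mat_double_commutator[OF unit] similarity_affine[OF PQ_carrier PQ kron2_carrier] KK ..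
  show ?thesis
    by (rule similar_matI[OF _ PQ QP M]) (use PQ_carrier superop_mat_carrier[of 2] in auto)
qed

lemma char_poly_double_commutator_diag:
  "char_poly ((- 2 * c) \<cdot>\<^sub>m 1\<^sub>m 4 + (2 * c) \<cdot>\<^sub>m kron2 (mat2 1 0 0 (-1)) (mat2 1 0 0 (-1)))
    = [:4 * c, 1:]\<^sup>2 * [:0, 1:]\<^sup>2"
  (is "char_poly ?D = _")
proof -
  have D: "?D = mat 4 4 (\<lambda>(k, l). if k = l \<and> (k = 1 \<or> k = 2) then - 4 * c else 0)"
    by (rule eq_matI) (auto simp: less_4_iff kron2_def)
  have "upper_triangular ?D"
    unfolding D by (auto simp: upper_triangular_def)
  moreover have "diag_mat ?D = [0, - 4 * c, - 4 * c, 0]"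
    unfolding D by (simp add: diag_mat_def eval_nat_numeral upt_rec)
  ultimately show ?thesis
    by (subst char_poly_upper_triangular[of _ 4]) (simp_all add: power2_eq_square algebra_simps)
qed

lemma not_minimally_degenerate_zero:
  assumes "\<And>\<rho>. \<rho> \<in> carrier_mat 2 2 \<Longrightarrow> L \<rho> = 0\<^sub>m 2 2"
  shows "\<not> minimally_degenerate 2 L"
proof -
  have "superop_mat 2 L = superop_mat 2 (\<lambda>\<rho>. 0\<^sub>m 2 2)"
    by (rule superop_mat_cong) (rule assms)
  also have "\<dots> = 0\<^sub>m 4 4"
    by (rule eq_matI) (auto simp: superop_mat_def)
  finally have "superop_mat 2 L = 0\<^sub>m 4 4" .
  moreover have "kernel_dim (0\<^sub>m 4 4 :: complex mat) = 4" by code_simp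
  ultimately show ?thesis unfolding minimally_degenerate_def by simp
qed

lemma not_minimally_degenerate_double_commutator:
  fixes p :: real
  assumes unit: "p\<^sup>2 + (cmod q)\<^sup>2 = 1"
    and L: "\<And>\<rho>. \<rho> \<in> carrier_mat 2 2 \<Longrightarrow>
      L \<rho> = c \<cdot>\<^sub>m (- commutator (spin_op p q) (commutator (spin_op p q) \<rho>))"
  shows "\<not> minimally_degenerate 2 L"
proof
  assume md: "minimally_degenerate 2 L"
  show False
  proof (cases "c = 0")
    case True
    have "L \<rho> = 0\<^sub>m 2 2" if \<rho>: "\<rho> \<in> carrier_mat 2 2" for \<rho>
    proof -
      obtain x y z w where "\<rho> = mat2 x y z w" using \<rho> by (rule mat2_cases)
      then show ?thesis
        unfolding L[OF \<rho>] using True by (simp add: spin_op_def commutator_def zero_mat2)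
    qed
    then show False using not_minimally_degenerate_zero md by blast
  next
    case False
    let ?M = "superop_mat 2 L"
    have "superop_mat 2 L = superop_mat 2 (\<lambda>\<rho>. c \<cdot>\<^sub>m (- commutator (spin_op p q) (commutator (spin_op p q) \<rho>)))"
      by (rule superop_mat_cong) (rule L)
    then have "char_poly ?M = char_poly ((- 2 * c) \<cdot>\<^sub>m 1\<^sub>m 4 + (2 * c) \<cdot>\<^sub>m kron2 (mat2 1 0 0 (-1)) (mat2 1 0 0 (-1)))"
      using char_poly_similar[OF superop_mat_double_commutator_similar[OF unit]] by (simp only:)
    also have "\<dots> = [:4 * c, 1:]\<^sup>2 * [:0, 1:]\<^sup>2"
      by (rule char_poly_double_commutator_diag)
    finally have cp: "char_poly ?M = [:4 * c, 1:]\<^sup>2 * [:0, 1:]\<^sup>2" .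
    moreover have "Polynomial.order (- 4 * c) ([:4 * c, 1:]\<^sup>2 * [:0, 1:]\<^sup>2) = 2"
    proof -
      have "Polynomial.order (- 4 * c) ([:0, 1:]\<^sup>2) = 0"
        using False by (intro order_0I) simp
      then show ?thesis
        using order_power_n_n[of "- 4 * c" 2] by (simp add: order_mult)
    qed
    moreover have "eigenvalue ?M (- 4 * c)"
      using cp by (simp add: eigenvalue_root_char_poly[OF superop_mat_carrier])
    ultimately show False
      using md False unfolding minimally_degenerate_def by auto
  qed
qed

section \<open>Dephasing Lindbladians on a qubit\<close>

text \<open>A Hermitian matrix is m + r K with centre m, radius r \<ge> 0 and unit axis K = spin_op p q;
  when r = 0 the axis is arbitrary and fixed to (p, q) = (1, 0).\<close>

definition herm_center :: "complex mat \<Rightarrow> real" where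
  "herm_center A = Re (A $$ (0, 0) + A $$ (1, 1)) / 2"

definition herm_radius :: "complex mat \<Rightarrow> real" where
  "herm_radius A = sqrt ((Re (A $$ (0, 0) - A $$ (1, 1)) / 2)\<^sup>2 + (Re (A $$ (0, 1)))\<^sup>2 + (Im (A $$ (0, 1)))\<^sup>2)"

definition herm_axis_z :: "complex mat \<Rightarrow> real" where
  "herm_axis_z A = (if herm_radius A = 0 then 1 else Re (A $$ (0, 0) - A $$ (1, 1)) / (2 * herm_radius A))"

definition herm_axis_xy :: "complex mat \<Rightarrow> complex" where
  "herm_axis_xy A = (if herm_radius A = 0 then 0 else A $$ (0, 1) / of_real (herm_radius A))"

lemma herm_axis_unit: "(herm_axis_z A)\<^sup>2 + (cmod (herm_axis_xy A))\<^sup>2 = 1"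
proof (cases "herm_radius A = 0")
  case False
  let ?c = "Re (A $$ (0, 0) - A $$ (1, 1)) / 2" and ?b = "A $$ (0, 1)"
  have r2: "(herm_radius A)\<^sup>2 = ?c\<^sup>2 + (cmod ?b)\<^sup>2"
    unfolding herm_radius_def by (simp add: cmod_power2 add.assoc)
  have "(herm_axis_z A)\<^sup>2 + (cmod (herm_axis_xy A))\<^sup>2 = (?c\<^sup>2 + (cmod ?b)\<^sup>2) / (herm_radius A)\<^sup>2"
    using False by (simp add: herm_axis_z_def herm_axis_xy_def norm_divide power_divide add_divide_distrib)
  also have "\<dots> = 1"
    unfolding r2[symmetric] using False by simp
  finally show ?thesis .
qed (simp add: herm_axis_z_def herm_axis_xy_def)

lemma hermitian_spin_decomposition:
  assumes "hermitian_op 2 A"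
  shows "A = spin_comb (of_real (herm_center A)) (of_real (herm_radius A)) (herm_axis_z A) (herm_axis_xy A)"
proof -
  obtain a b c d where A: "A = mat2 a b c d"
    using assms unfolding hermitian_op_def by (auto elim: mat2_cases)
  have "cnj a = a" "c = cnj b" "cnj d = d"
    using assms unfolding A hermitian_op_mat2_iff by auto
  then have A: "A = mat2 (of_real (Re a)) b (cnj b) (of_real (Re d))"
    unfolding A by (simp add: complex_eq_iff)
  show ?thesis
  proof (cases "herm_radius A = 0")
    case True
    then have "b = 0" "Re a = Re d"
      unfolding herm_radius_def A by (auto simp: complex_eq_iff power2_eq_square add_nonneg_eq_0_iff)
    then show ?thesis using True
      by (simp add: A spin_comb_mat2 herm_center_def herm_axis_z_def herm_axis_xy_def field_simps)
  next
    case False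
    then show ?thesis
      by (simp add: A spin_comb_mat2 herm_center_def herm_axis_z_def herm_axis_xy_def complex_eq_iff
          field_simps)
  qed
qed

definition spin_coeff :: "real \<Rightarrow> complex \<Rightarrow> complex mat \<Rightarrow> complex" where
  "spin_coeff p q G = op_trace 2 (spin_op p q * G) / 2"

lemma op_trace_2: "op_trace 2 A = A $$ (0, 0) + A $$ (1, 1)"
  by (simp add: op_trace_def numeral_2_eq_2)

lemma spin_coeff_eq:
  assumes "G \<in> carrier_mat 2 2"
  shows "spin_coeff p q G = (of_real p * G $$ (0, 0) + q * G $$ (1, 0) + cnj q * G $$ (0, 1) - of_real p * G $$ (1, 1)) / 2"
  using assms by (elim mat2_cases) (simp add: spin_coeff_def spin_op_def algebra_simps)

lemma spin_comb_coeffs: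
  assumes "p\<^sup>2 + (cmod q)\<^sup>2 = 1"
  shows "op_trace 2 (spin_comb u v p q) / 2 = u" and "spin_coeff p q (spin_comb u v p q) = v"
proof -
  show "op_trace 2 (spin_comb u v p q) / 2 = u" by (simp add: spin_comb_mat2)
  have "spin_coeff p q (spin_comb u v p q) = v * (of_real p * of_real p + q * cnj q)"
    by (simp add: spin_coeff_def spin_op_def spin_comb_mat2 algebra_simps)
  then show "spin_coeff p q (spin_comb u v p q) = v"
    using unit_axis_complex[OF assms] by simp
qed

lemma dephasing_jump_spin_comb:
  assumes "dephasing 2 Ht I \<Gamma>" and "\<alpha> \<in> I"
  defines "p \<equiv> herm_axis_z Ht" and "q \<equiv> herm_axis_xy Ht"
  shows "\<Gamma> \<alpha> = spin_comb (op_trace 2 (\<Gamma> \<alpha>) / 2) (spin_coeff p q (\<Gamma> \<alpha>)) p q"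
    and "herm_radius Ht = 0 \<Longrightarrow> spin_coeff p q (\<Gamma> \<alpha>) = 0"
proof -
  obtain f where f: "\<Gamma> \<alpha> = matfun 2 f Ht" and herm: "hermitian_op 2 Ht"
    using assms(1,2) unfolding dephasing_def by blast
  let ?m = "herm_center Ht" and ?r = "herm_radius Ht"
  have unit: "p\<^sup>2 + (cmod q)\<^sup>2 = 1" unfolding p_def q_def by (rule herm_axis_unit)
  have "\<Gamma> \<alpha> = spin_comb ((f (?m + ?r) + f (?m - ?r)) / 2) ((f (?m + ?r) - f (?m - ?r)) / 2) p q"
    unfolding f p_def q_def
    by (subst hermitian_spin_decomposition[OF herm]) (rule matfun_spin_comb[OF herm_axis_unit], simp add: herm_radius_def)
  then show "\<Gamma> \<alpha> = spin_comb (op_trace 2 (\<Gamma> \<alpha>) / 2) (spin_coeff p q (\<Gamma> \<alpha>)) p q"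
    and "?r = 0 \<Longrightarrow> spin_coeff p q (\<Gamma> \<alpha>) = 0"
    by (simp_all add: spin_comb_coeffs[OF unit])
qed

definition dephasing_freq :: "complex mat \<Rightarrow> 'i set \<Rightarrow> ('i \<Rightarrow> complex mat) \<Rightarrow> real" where
  "dephasing_freq Ht I \<Gamma> = herm_radius Ht
     - (\<Sum>\<alpha>\<in>I. Im (spin_coeff (herm_axis_z Ht) (herm_axis_xy Ht) (\<Gamma> \<alpha>) * cnj (op_trace 2 (\<Gamma> \<alpha>) / 2)))"

definition dephasing_rate :: "complex mat \<Rightarrow> 'i set \<Rightarrow> ('i \<Rightarrow> complex mat) \<Rightarrow> real" where
  "dephasing_rate Ht I \<Gamma> = (\<Sum>\<alpha>\<in>I. (cmod (spin_coeff (herm_axis_z Ht) (herm_axis_xy Ht) (\<Gamma> \<alpha>)))\<^sup>2)"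

lemma lindbladian_dephasing_eq:
  assumes dep: "dephasing 2 Ht I \<Gamma>" and \<rho>: "\<rho> \<in> carrier_mat 2 2"
  defines "K \<equiv> spin_op (herm_axis_z Ht) (herm_axis_xy Ht)"
  shows "lindbladian 2 Ht I \<Gamma> \<rho> = (- \<i> * of_real (dephasing_freq Ht I \<Gamma>)) \<cdot>\<^sub>m commutator K \<rho>
    + of_real (dephasing_rate Ht I \<Gamma> / 2) \<cdot>\<^sub>m (- commutator K (commutator K \<rho>))"
proof -
  have herm: "hermitian_op 2 Ht" using dep unfolding dephasing_def by blast
  show ?thesis
    unfolding K_def dephasing_freq_def dephasing_rate_def
    by (subst hermitian_spin_decomposition[OF herm], rule lindbladian_spin_comb[OF herm_axis_unit _ \<rho>])
      (rule dephasing_jump_spin_comb(1)[OF dep])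
qed

lemma dephasing_freq_nonzero:
  assumes dep: "dephasing 2 Ht I \<Gamma>" and md: "minimally_degenerate 2 (lindbladian 2 Ht I \<Gamma>)"
  shows "dephasing_freq Ht I \<Gamma> \<noteq> 0"
proof
  assume "dephasing_freq Ht I \<Gamma> = 0"
  then have "lindbladian 2 Ht I \<Gamma> \<rho> = of_real (dephasing_rate Ht I \<Gamma> / 2) \<cdot>\<^sub>m
      (- commutator (spin_op (herm_axis_z Ht) (herm_axis_xy Ht)) (commutator (spin_op (herm_axis_z Ht) (herm_axis_xy Ht)) \<rho>))"
    if \<rho>: "\<rho> \<in> carrier_mat 2 2" for \<rho>
  proof -
    obtain x y z w where "\<rho> = mat2 x y z w" using \<rho> by (rule mat2_cases)
    then show ?thesis unfolding lindbladian_dephasing_eq[OF dep \<rho>] \<open>dephasing_freq Ht I \<Gamma> = 0\<close>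
      by (simp add: spin_op_def commutator_def)
  qed
  then show False
    using not_minimally_degenerate_double_commutator[OF herm_axis_unit] md by blast
qed

lemma herm_radius_pos:
  assumes dep: "dephasing 2 Ht I \<Gamma>" and md: "minimally_degenerate 2 (lindbladian 2 Ht I \<Gamma>)"
  shows "herm_radius Ht > 0"
proof (rule ccontr)
  assume "\<not> herm_radius Ht > 0"
  moreover have "herm_radius Ht \<ge> 0" by (simp add: herm_radius_def)
  ultimately have "herm_radius Ht = 0" by simp
  then have "dephasing_freq Ht I \<Gamma> = 0"
    by (simp add: dephasing_freq_def dephasing_jump_spin_comb(2)[OF dep])
  with dephasing_freq_nonzero[OF dep md] show False ..
qed

definition dephasing_hamiltonian :: "complex mat \<Rightarrow> 'i set \<Rightarrow> ('i \<Rightarrow> complex mat) \<Rightarrow> complex mat" where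
  "dephasing_hamiltonian Ht I \<Gamma> =
     spin_comb 0 (of_real (dephasing_freq Ht I \<Gamma>)) (herm_axis_z Ht) (herm_axis_xy Ht)"

definition dephasing_gamma :: "complex mat \<Rightarrow> 'i set \<Rightarrow> ('i \<Rightarrow> complex mat) \<Rightarrow> real" where
  "dephasing_gamma Ht I \<Gamma> = dephasing_rate Ht I \<Gamma> / \<bar>dephasing_freq Ht I \<Gamma>\<bar>"

lemma double_commutator_spin_comb:
  assumes "\<rho> \<in> carrier_mat 2 2"
  shows "commutator (spin_comb 0 (of_real s) p q) (commutator (spin_comb 0 (of_real s) p q) \<rho>)
    = of_real (s * s) \<cdot>\<^sub>m commutator (spin_op p q) (commutator (spin_op p q) \<rho>)"
proof -
  obtain x y z w where "\<rho> = mat2 x y z w" using assms by (rule mat2_cases)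
  then show ?thesis by (simp add: commutator_def spin_comb_mat2 spin_op_def algebra_simps)
qed

lemma dephasing_representation:
  assumes dep: "dephasing 2 Ht I \<Gamma>" and md: "minimally_degenerate 2 (lindbladian 2 Ht I \<Gamma>)"
  defines "H \<equiv> dephasing_hamiltonian Ht I \<Gamma>" and "\<gamma> \<equiv> dephasing_gamma Ht I \<Gamma>"
  shows "hermitian_op 2 H \<and> nondegenerate_op 2 H \<and> op_trace 2 H = 0 \<and> \<gamma> \<ge> 0 \<and>
    (\<forall>\<rho>\<in>carrier_mat 2 2. lindbladian 2 Ht I \<Gamma> \<rho> =
       (- \<i>) \<cdot>\<^sub>m commutator H \<rho>
       + complex_of_real (\<gamma> / 2) \<cdot>\<^sub>m (- commutator (signed_sqrt_op 2 H) (commutator (signed_sqrt_op 2 H) \<rho>)))"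
proof (intro conjI ballI)
  let ?p = "herm_axis_z Ht" and ?q = "herm_axis_xy Ht"
  let ?w = "dephasing_freq Ht I \<Gamma>" and ?\<sigma> = "dephasing_rate Ht I \<Gamma>"
  let ?K = "spin_op ?p ?q"
  have w: "?w \<noteq> 0" by (rule dephasing_freq_nonzero[OF dep md])
  have H: "H = spin_comb 0 (of_real ?w) ?p ?q" by (simp add: H_def dephasing_hamiltonian_def)
  show "hermitian_op 2 H" "op_trace 2 H = 0"
    by (simp_all add: H spin_comb_mat2 hermitian_op_mat2_iff)
  show "nondegenerate_op 2 H" unfolding H by (rule nondegenerate_spin_comb[OF herm_axis_unit w])
  show "\<gamma> \<ge> 0" by (simp add: \<gamma>_def dephasing_gamma_def dephasing_rate_def sum_nonneg)
  fix \<rho> :: "complex mat" assume \<rho>: "\<rho> \<in> carrier_mat 2 2"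
  let ?s = "sgn ?w * sqrt \<bar>?w\<bar>"
  text \<open>The double commutator with sqrt(H) is |w| times the one with K; \<gamma> was chosen to cancel |w|.\<close>
  have ss: "?s * ?s = \<bar>?w\<bar>" by (simp add: sgn_if)
  have "?\<sigma> = \<gamma> * \<bar>?w\<bar>" using w by (simp add: \<gamma>_def dephasing_gamma_def)
  then have coeff: "complex_of_real ?\<sigma> = of_real \<gamma> * of_real \<bar>?w\<bar>" by simp
  have HK: "commutator H \<rho> = of_real ?w \<cdot>\<^sub>m commutator ?K \<rho>"
    unfolding H by (rule commutator_spin_comb[OF \<rho>])
  have sqrtHK: "commutator (signed_sqrt_op 2 H) (commutator (signed_sqrt_op 2 H) \<rho>)
      = of_real \<bar>?w\<bar> \<cdot>\<^sub>m commutator ?K (commutator ?K \<rho>)"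
    unfolding H signed_sqrt_op_spin_comb[OF herm_axis_unit] double_commutator_spin_comb[OF \<rho>] ss ..
  have "commutator ?K \<rho> \<in> carrier_mat 2 2" "commutator ?K (commutator ?K \<rho>) \<in> carrier_mat 2 2"
    using \<rho> by (simp_all add: commutator_carrier)
  then show "lindbladian 2 Ht I \<Gamma> \<rho> = (- \<i>) \<cdot>\<^sub>m commutator H \<rho>
      + complex_of_real (\<gamma> / 2) \<cdot>\<^sub>m (- commutator (signed_sqrt_op 2 H) (commutator (signed_sqrt_op 2 H) \<rho>))"
    unfolding lindbladian_dephasing_eq[OF dep \<rho>] HK sqrtHK
    by (intro eq_matI) (auto simp: coeff algebra_simps)
qed

lemma smooth_herm_axis:
  assumes A: "smooth_op_family 2 A" and pos: "\<And>s. herm_radius (A s) > 0"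
  shows "smooth_fun (\<lambda>s. herm_radius (A s))" and "smooth_fun (\<lambda>s. herm_axis_z (A s))"
    and "smooth_fun (\<lambda>s. herm_axis_xy (A s))"
proof -
  note entry = smooth_op_familyD[OF A]
  show r: "smooth_fun (\<lambda>s. herm_radius (A s))"
    using pos unfolding herm_radius_def
    by (intro smooth_fun_sqrt smooth_fun_add smooth_fun_power2 smooth_fun_divide_const smooth_fun_Re
        smooth_fun_Im smooth_fun_diff entry) simp_all
  have ir: "smooth_fun (\<lambda>s. 1 / herm_radius (A s))" by (rule smooth_fun_inverse[OF r pos])
  have "smooth_fun (\<lambda>s. Re (A s $$ (0, 0) - A s $$ (1, 1)) / 2 * (1 / herm_radius (A s)))"
    by (intro smooth_fun_mult smooth_fun_divide_const smooth_fun_Re smooth_fun_diff entry ir) simp_all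
  then show "smooth_fun (\<lambda>s. herm_axis_z (A s))"
    using pos by (simp add: herm_axis_z_def less_imp_neq[symmetric])
  have "smooth_fun (\<lambda>s. A s $$ (0, 1) * of_real (1 / herm_radius (A s)))"
    by (intro smooth_fun_mult smooth_fun_of_real entry ir) simp_all
  then show "smooth_fun (\<lambda>s. herm_axis_xy (A s))"
    using pos by (simp add: herm_axis_xy_def less_imp_neq[symmetric] divide_inverse)
qed

lemma smooth_dephasing_representation:
  assumes dep: "\<And>s. dephasing 2 (Hts s) I (\<Gamma>s s)"
    and md: "\<And>s. minimally_degenerate 2 (lindbladian 2 (Hts s) I (\<Gamma>s s))"
    and Hts: "smooth_op_family 2 Hts" and \<Gamma>s: "\<forall>\<alpha>\<in>I. smooth_op_family 2 (\<lambda>s. \<Gamma>s s \<alpha>)"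
  shows "smooth_op_family 2 (\<lambda>s. dephasing_hamiltonian (Hts s) I (\<Gamma>s s))"
    and "smooth_fun (\<lambda>s. dephasing_gamma (Hts s) I (\<Gamma>s s))"
proof -
  have fin: "finite I" using dep[of 0] unfolding dephasing_def by blast
  note pos = herm_radius_pos[OF dep md] and w = dephasing_freq_nonzero[OF dep md]
  note axis = smooth_herm_axis[OF Hts pos]
  let ?p = "\<lambda>s. herm_axis_z (Hts s)" and ?q = "\<lambda>s. herm_axis_xy (Hts s)"
  have entry: "smooth_fun (\<lambda>s. \<Gamma>s s \<alpha> $$ (i, j))" if "\<alpha> \<in> I" "i < 2" "j < 2" for \<alpha> i j
    using \<Gamma>s that smooth_op_familyD[of 2 "\<lambda>s. \<Gamma>s s \<alpha>" i j] by simp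
  have carrier: "\<Gamma>s s \<alpha> \<in> carrier_mat 2 2" if "\<alpha> \<in> I" for s \<alpha>
    using \<Gamma>s that unfolding smooth_op_family_def by blast
  have u: "smooth_fun (\<lambda>s. op_trace 2 (\<Gamma>s s \<alpha>) / 2)" if "\<alpha> \<in> I" for \<alpha>
    unfolding op_trace_2 using that by (intro smooth_fun_divide_const smooth_fun_add entry) simp_all
  have v: "smooth_fun (\<lambda>s. spin_coeff (?p s) (?q s) (\<Gamma>s s \<alpha>))" if "\<alpha> \<in> I" for \<alpha>
    unfolding spin_coeff_eq[OF carrier[OF that]] using that axis
    by (intro smooth_fun_divide_const smooth_fun_diff smooth_fun_add smooth_fun_mult smooth_fun_of_real
        smooth_fun_cnj entry) simp_all
  have freq: "smooth_fun (\<lambda>s. dephasing_freq (Hts s) I (\<Gamma>s s))"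
    unfolding dephasing_freq_def
    by (intro smooth_fun_diff axis(1) smooth_fun_sum[OF fin] smooth_fun_Im smooth_fun_mult smooth_fun_cnj u v)
  have rate: "smooth_fun (\<lambda>s. dephasing_rate (Hts s) I (\<Gamma>s s))"
    unfolding dephasing_rate_def cmod_power2
    by (intro smooth_fun_sum[OF fin] smooth_fun_add smooth_fun_power2 smooth_fun_Re smooth_fun_Im v)
  show "smooth_op_family 2 (\<lambda>s. dephasing_hamiltonian (Hts s) I (\<Gamma>s s))"
    unfolding smooth_op_family_def dephasing_hamiltonian_def spin_comb_mat2
    by (auto simp: less_2_iff intro!: smooth_fun_mult smooth_fun_of_real smooth_fun_cnj smooth_fun_uminus
        smooth_fun_add freq axis smooth_fun_const)
  have "smooth_fun (\<lambda>s. dephasing_rate (Hts s) I (\<Gamma>s s) * (1 / sqrt ((dephasing_freq (Hts s) I (\<Gamma>s s))\<^sup>2)))"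
    using w by (intro smooth_fun_mult rate smooth_fun_inverse smooth_fun_sqrt smooth_fun_power2 freq) simp_all
  then show "smooth_fun (\<lambda>s. dephasing_gamma (Hts s) I (\<Gamma>s s))"
    by (simp add: dephasing_gamma_def)
qed

theorem lemma3p1:
  shows "(\<forall>(Ht :: complex mat) (I :: 'i set) \<Gamma>.
            dephasing 2 Ht I \<Gamma> \<and>
            minimally_degenerate 2 (lindbladian 2 Ht I \<Gamma>) \<longrightarrow>
            (\<exists>H (\<gamma>::real). hermitian_op 2 H \<and> nondegenerate_op 2 H \<and> op_trace 2 H = 0 \<and> \<gamma> \<ge> 0 \<and>
               (\<forall>\<rho>\<in>carrier_mat 2 2. lindbladian 2 Ht I \<Gamma> \<rho> =
                  (- \<i>) \<cdot>\<^sub>m commutator H \<rho>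
                  + complex_of_real (\<gamma> / 2) \<cdot>\<^sub>m
                     (- commutator (signed_sqrt_op 2 H) (commutator (signed_sqrt_op 2 H) \<rho>)))))
       \<and>
       (\<forall>(Hts :: real \<Rightarrow> complex mat) (I :: 'i set) (\<Gamma>s :: real \<Rightarrow> 'i \<Rightarrow> complex mat).
            (\<forall>s. dephasing 2 (Hts s) I (\<Gamma>s s) \<and>
                 minimally_degenerate 2 (lindbladian 2 (Hts s) I (\<Gamma>s s))) \<and>
            smooth_op_family 2 Hts \<and> (\<forall>\<alpha>\<in>I. smooth_op_family 2 (\<lambda>s. \<Gamma>s s \<alpha>)) \<longrightarrow>
            (\<exists>(Hs :: real \<Rightarrow> complex mat) (\<gamma>s :: real \<Rightarrow> real).
               smooth_op_family 2 Hs \<and> smooth_fun \<gamma>s \<and>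
               (\<forall>s. hermitian_op 2 (Hs s) \<and> nondegenerate_op 2 (Hs s) \<and> op_trace 2 (Hs s) = 0 \<and>
                    \<gamma>s s \<ge> 0 \<and>
                    (\<forall>\<rho>\<in>carrier_mat 2 2. lindbladian 2 (Hts s) I (\<Gamma>s s) \<rho> =
                       (- \<i>) \<cdot>\<^sub>m commutator (Hs s) \<rho>
                       + complex_of_real (\<gamma>s s / 2) \<cdot>\<^sub>m
                          (- commutator (signed_sqrt_op 2 (Hs s))
                               (commutator (signed_sqrt_op 2 (Hs s)) \<rho>))))))"
proof (intro conjI allI impI, goal_cases)
  case (1 Ht I \<Gamma>)
  then show ?case using dephasing_representation by blast
next
  case (2 Hts I \<Gamma>s)
  then have dep: "\<And>s. dephasing 2 (Hts s) I (\<Gamma>s s)"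
    and md: "\<And>s. minimally_degenerate 2 (lindbladian 2 (Hts s) I (\<Gamma>s s))"
    and smooth: "smooth_op_family 2 Hts" "\<forall>\<alpha>\<in>I. smooth_op_family 2 (\<lambda>s. \<Gamma>s s \<alpha>)"
    by auto
  show ?case
    using smooth_dephasing_representation[OF dep md smooth] dephasing_representation[OF dep md] by blast
qed

end
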